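(* $F$ is bounded below (on $\{x\in\mathcal{X}:z\ge0\}$) and $r$ is bounded. $F$ and $r$ are Lipschitz continuous in $x$ with respect to $\|\cdot\|_{\mathcal{X}}$. Furthermore, $F$ and $r$ are Lipschitz continuous in $z$ with respect to $\|\cdot\|_{L^1(\Omega)}$.
   Context: Let $-\infty<t_0<t_E<\infty$, $\Omega=(t_0,t_E)$, points $t_1,\dots,t_M\in[t_0,t_E]$. $\mathcal{X}=(H^1(\Omega))^{n_y}\times(L^2(\Omega))^{n_z}$ with inner product $\sum_j\langle y_j,v_j\rangle_{H^1(\Omega)}+\sum_j\langle z_j,w_j\rangle_{L^2(\Omega)}$ and induced norm $\|\cdot\|_{\mathcal{X}}$; $x=(y,z)$. Given $f:\mathbb{R}^{n_y}\times\mathbb{R}^{n_y}\times\mathbb{R}^{n_z}\times\Omega\to\mathbb{R}$, $c:\mathbb{R}^{n_y}\times\mathbb{R}^{n_y}\times\mathbb{R}^{n_z}\times\Omega\to\mathbb{R}^{n_c}$, $b:(\mathbb{R}^{n_y})^M\to\mathbb{R}^{n_b}$, define $F(x)=\int_\Omega f(\dot y(t),y(t),z(t),t)dt$ and $r(x)=\int_\Omega\|c(\dot y(t),y(t),z(t),t)\|_2^2dt+\|b(y(t_1),\dots,y(t_M))\|_2^2$. Assumptions: (A.2) $\|c(\dot y(t),y(t),z(t),t)\|_1$ and $\|b(y(t_1),\dots,y(t_M))\|_1$ are bounded for all $x\in\mathcal{X}$ with $z\ge0$ and all $t\in\Omega$, and $F$ is bounded below on $\{x\in\mathcal{X}:z\ge0\}$.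 (A.3) $f,c,b$ are globally Lipschitz continuous in all arguments except $t$. *)

theory Defs
  imports "HOL-Analysis.Analysis"
begin

definition Omega :: "real \<Rightarrow> real \<Rightarrow> real set" where
  "Omega t0 tE = {t0<..<tE}"

definition L2_on :: "real \<Rightarrow> real \<Rightarrow> (real \<Rightarrow> 'a::euclidean_space) \<Rightarrow> bool" where
  "L2_on t0 tE u \<longleftrightarrow> u \<in> borel_measurable (lebesgue_on (Omega t0 tE))
     \<and> integrable (lebesgue_on (Omega t0 tE)) (\<lambda>t. (norm (u t))\<^sup>2)"

text \<open>y in H^1(Omega)^ny with weak derivative dy: y is the (absolutely) continuous
  representative on [t0,tE], y(t) = y(t0) + int_{t0}^t dy, with y, dy in L2.\<close>
definition H1_pair :: "real \<Rightarrow> real \<Rightarrow> (real \<Rightarrow> real^'n) \<Rightarrow> (real \<Rightarrow> real^'n) \<Rightarrow> bool" where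
  "H1_pair t0 tE y dy \<longleftrightarrow> L2_on t0 tE y \<and> L2_on t0 tE dy
     \<and> (\<forall>t\<in>{t0..tE}. (dy has_integral (y t - y t0)) {t0..t})"

text \<open>Elements x = (y,z) of X, represented as triples (y, dy, z) with dy the weak derivative of y.\<close>
definition Xspace :: "real \<Rightarrow> real \<Rightarrow>
    ((real \<Rightarrow> real^'ny) \<times> (real \<Rightarrow> real^'ny) \<times> (real \<Rightarrow> real^'nz)) set" where
  "Xspace t0 tE = {(y, dy, z). H1_pair t0 tE y dy \<and> L2_on t0 tE z}"

definition normX :: "real \<Rightarrow> real \<Rightarrow> (real \<Rightarrow> real^'ny) \<Rightarrow> (real \<Rightarrow> real^'ny) \<Rightarrow> (real \<Rightarrow> real^'nz) \<Rightarrow> real" where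
  "normX t0 tE y dy z = sqrt (
      (\<integral>t. (norm (y t))\<^sup>2 \<partial>lebesgue_on (Omega t0 tE))
    + (\<integral>t. (norm (dy t))\<^sup>2 \<partial>lebesgue_on (Omega t0 tE))
    + (\<integral>t. (norm (z t))\<^sup>2 \<partial>lebesgue_on (Omega t0 tE)))"

definition l1norm :: "real^'n \<Rightarrow> real" where
  "l1norm v = (\<Sum>j\<in>UNIV. \<bar>v $ j\<bar>)"

definition L1norm :: "real \<Rightarrow> real \<Rightarrow> (real \<Rightarrow> real^'n) \<Rightarrow> real" where
  "L1norm t0 tE z = (\<integral>t. l1norm (z t) \<partial>lebesgue_on (Omega t0 tE))"

definition z_nonneg :: "real \<Rightarrow> real \<Rightarrow> (real \<Rightarrow> real^'n) \<Rightarrow> bool" where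
  "z_nonneg t0 tE z \<longleftrightarrow> (\<forall>t\<in>Omega t0 tE. \<forall>j. 0 \<le> z t $ j)"

definition Ffun :: "real \<Rightarrow> real \<Rightarrow> (real^'ny \<Rightarrow> real^'ny \<Rightarrow> real^'nz \<Rightarrow> real \<Rightarrow> real)
    \<Rightarrow> (real \<Rightarrow> real^'ny) \<Rightarrow> (real \<Rightarrow> real^'ny) \<Rightarrow> (real \<Rightarrow> real^'nz) \<Rightarrow> real" where
  "Ffun t0 tE f y dy z = (\<integral>t. f (dy t) (y t) (z t) t \<partial>lebesgue_on (Omega t0 tE))"

definition rfun :: "real \<Rightarrow> real \<Rightarrow> ('m::finite \<Rightarrow> real)
    \<Rightarrow> (real^'ny \<Rightarrow> real^'ny \<Rightarrow> real^'nz \<Rightarrow> real \<Rightarrow> real^'nc)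
    \<Rightarrow> ((real^'ny)^'m \<Rightarrow> real^'nb)
    \<Rightarrow> (real \<Rightarrow> real^'ny) \<Rightarrow> (real \<Rightarrow> real^'ny) \<Rightarrow> (real \<Rightarrow> real^'nz) \<Rightarrow> real" where
  "rfun t0 tE tp c b y dy z =
     (\<integral>t. (norm (c (dy t) (y t) (z t) t))\<^sup>2 \<partial>lebesgue_on (Omega t0 tE))
     + (norm (b (\<chi> i. y (tp i))))\<^sup>2"

end

theory Submission
  imports Defs
begin

text \<open>The integrands of \<open>F\<close> and \<open>r\<close> are Lipschitz in \<open>(y', y, z)\<close> uniformly in \<open>t\<close>, so the
  difference of two integrands is bounded pointwise by a multiple of \<open>|\<delta>y'| + |\<delta>y| + |\<delta>z|\<close>;
  integrating and applying Cauchy-Schwarz on the bounded interval gives a multiple of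
  \<open>sqrt (tE - t0) \<parallel>\<delta>x\<parallel>\<^sub>X\<close>. When only \<open>z\<close> varies the pointwise bound is a multiple of
  \<open>|\<delta>z| \<le> |\<delta>z|\<^sub>1\<close>, which integrates to the \<open>L\<^sup>1\<close> bound. For \<open>r\<close> the squares are handled by
  \<open>||a|\<^sup>2 - |b|\<^sup>2| \<le> 2 B |a - b|\<close> with the bounds (A.2) on \<open>c\<close> and \<open>b\<close>, and the point values
  \<open>y(t\<^sub>i)\<close> are controlled by the embedding of \<open>H\<^sup>1\<close> into the continuous functions,
  \<open>|y s| \<le> (\<integral>|y|) / (tE - t0) + 2 \<integral>|y'|\<close>. The composed integrands are measurable because they
  are Caratheodory functions: measurable in \<open>t\<close> and Lipschitz in the state.\<close>

section \<open>Measurability of Caratheodory integrands\<close>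

lemma lipschitz_on_eq_INF_dense:
  fixes \<phi> :: "'p::metric_space \<Rightarrow> real"
  assumes lip: "L-lipschitz_on UNIV \<phi>"
    and dense: "\<And>U. open U \<Longrightarrow> U \<noteq> {} \<Longrightarrow> \<exists>d\<in>D. d \<in> U"
  shows "\<phi> x = (INF d\<in>D. \<phi> d + L * dist x d)"
proof (rule antisym)
  have L: "0 \<le> L"
    using lip by (rule lipschitz_on_nonneg)
  have lip': "dist (\<phi> p) (\<phi> q) \<le> L * dist p q" for p q
    using lip by (rule lipschitz_onD) auto
  have lower: "\<phi> x \<le> \<phi> d + L * dist x d" for d
    using lip'[of x d] by (simp add: dist_real_def)
  moreover have "D \<noteq> {}"
    using dense[of UNIV] by auto
  ultimately show "\<phi> x \<le> (INF d\<in>D. \<phi> d + L * dist x d)"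
    by (intro cINF_greatest)
  show "(INF d\<in>D. \<phi> d + L * dist x d) \<le> \<phi> x"
  proof (rule field_le_epsilon)
    fix e :: real
    assume "e > 0"
    with L have "e / (2 * L + 1) > 0"
      by simp
    then obtain d where d: "d \<in> D" "dist x d < e / (2 * L + 1)"
      using dense[of "ball x (e / (2 * L + 1))"] by auto
    have "(INF d\<in>D. \<phi> d + L * dist x d) \<le> \<phi> d + L * dist x d"
      using lower d(1) by (intro cINF_lower bdd_belowI2)
    also have "\<dots> \<le> \<phi> x + 2 * L * dist x d"
      using lip'[of d x] by (simp add: dist_real_def dist_commute)
    also have "2 * L * dist x d \<le> e"
    proof -
      have "dist x d * (2 * L + 1) < e"
        using d(2) L by (simp add: pos_less_divide_eq)
      then have "2 * L * dist x d + dist x d < e"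
        by (simp add: algebra_simps)
      then show ?thesis
        using zero_le_dist[of x d] by linarith
    qed
    finally show "(INF d\<in>D. \<phi> d + L * dist x d) \<le> \<phi> x + e"
      by simp
  qed
qed

lemma borel_measurable_Caratheodory_real:
  fixes g :: "'p::{metric_space,second_countable_topology} \<Rightarrow> 'a \<Rightarrow> real"
  assumes g_meas: "\<And>p. (\<lambda>t. g p t) \<in> borel_measurable M"
    and g_lip: "\<And>t. t \<in> space M \<Longrightarrow> L-lipschitz_on UNIV (\<lambda>p. g p t)"
    and X_meas: "X \<in> borel_measurable M"
  shows "(\<lambda>t. g (X t) t) \<in> borel_measurable M"
proof -
  obtain D :: "'p set" where D: "countable D" "\<And>U. open U \<Longrightarrow> U \<noteq> {} \<Longrightarrow> \<exists>d\<in>D. d \<in> U"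
    using countable_dense_setE by blast
  have "(\<lambda>t. INF d\<in>D. g d t + L * dist (X t) d) \<in> borel_measurable M"
    using D(1) g_meas X_meas by measurable
  moreover have "g (X t) t = (INF d\<in>D. g d t + L * dist (X t) d)" if "t \<in> space M" for t
    using g_lip[OF that] D(2) by (rule lipschitz_on_eq_INF_dense)
  ultimately show ?thesis
    by (simp cong: measurable_cong)
qed

lemma borel_measurable_Caratheodory:
  fixes g :: "'p::{metric_space,second_countable_topology} \<Rightarrow> 'a \<Rightarrow> 'r::euclidean_space"
  assumes g_meas: "\<And>p. (\<lambda>t. g p t) \<in> borel_measurable M"
    and g_lip: "\<And>t. t \<in> space M \<Longrightarrow> L-lipschitz_on UNIV (\<lambda>p. g p t)"
    and X_meas: "X \<in> borel_measurable M"
  shows "(\<lambda>t. g (X t) t) \<in> borel_measurable M"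
proof (subst borel_measurable_euclidean_space, intro ballI)
  fix i :: 'r
  assume i: "i \<in> Basis"
  have lip: "L-lipschitz_on UNIV (\<lambda>p. g p t \<bullet> i)" if "t \<in> space M" for t
  proof (rule lipschitz_onI)
    show "dist (g p t \<bullet> i) (g q t \<bullet> i) \<le> L * dist p q" for p q
      using Basis_le_norm[OF i, of "g p t - g q t"] lipschitz_onD[OF g_lip[OF that], of p q]
      by (simp add: dist_real_def dist_norm inner_diff_left)
    show "0 \<le> L"
      using g_lip[OF that] by (rule lipschitz_on_nonneg)
  qed
  show "(\<lambda>t. g (X t) t \<bullet> i) \<in> borel_measurable M"
  proof (rule borel_measurable_Caratheodory_real[where g = "\<lambda>p t. g p t \<bullet> i", OF _ lip X_meas])
    show "(\<lambda>t. g p t \<bullet> i) \<in> borel_measurable M" for p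
      using g_meas[of p] by measurable
  qed
qed

lemma abs_integral_diff_le:
  fixes g1 g2 h :: "'a \<Rightarrow> real"
  assumes g1: "g1 \<in> borel_measurable M" and g2: "g2 \<in> borel_measurable M"
    and h: "integrable M h"
    and bound: "\<And>t. t \<in> space M \<Longrightarrow> \<bar>g1 t - g2 t\<bar> \<le> h t"
  shows "\<bar>integral\<^sup>L M g1 - integral\<^sup>L M g2\<bar> \<le> integral\<^sup>L M h"
proof -
  \<comment> \<open>\<open>g1\<close> and \<open>g2\<close> need not be integrable: they are so simultaneously, and otherwise
    both integrals are \<open>0\<close>.\<close>
  have "AE t in M. norm (g1 t - g2 t) \<le> norm (h t)"
    using bound by (intro AE_I2) (auto intro: order_trans[OF _ abs_ge_self])
  then have diff: "integrable M (\<lambda>t. g1 t - g2 t)"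
    using h g1 g2 by (intro Bochner_Integration.integrable_bound[OF h]) auto
  have h_nonneg: "0 \<le> integral\<^sup>L M h"
    using bound by (intro integral_nonneg_AE AE_I2) (meson abs_ge_zero order_trans)
  show ?thesis
  proof (cases "integrable M g1")
    case True
    have "integrable M (\<lambda>t. g1 t - (g1 t - g2 t))"
      using True diff by (rule Bochner_Integration.integrable_diff)
    then have "integrable M g2"
      by simp
    with True have "\<bar>integral\<^sup>L M g1 - integral\<^sup>L M g2\<bar> = \<bar>\<integral>t. g1 t - g2 t \<partial>M\<bar>"
      by simp
    also have "\<dots> \<le> (\<integral>t. \<bar>g1 t - g2 t\<bar> \<partial>M)"
      by (rule integral_abs_bound)
    also have "\<dots> \<le> integral\<^sup>L M h"
      using diff h bound by (intro integral_mono) auto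
    finally show ?thesis .
  next
    case False
    have "\<not> integrable M g2"
    proof
      assume "integrable M g2"
      then have "integrable M (\<lambda>t. g2 t + (g1 t - g2 t))"
        using diff by (rule Bochner_Integration.integrable_add)
      with False show False
        by simp
    qed
    with False h_nonneg show ?thesis
      by (simp add: not_integrable_integral_eq)
  qed
qed

lemma (in finite_measure) abs_integral_le_sqrt_measure_mult_sqrt_integral_square:
  fixes h :: "'a \<Rightarrow> real"
  assumes h: "h \<in> borel_measurable M" and h2: "integrable M (\<lambda>t. (h t)\<^sup>2)"
  shows "\<bar>integral\<^sup>L M h\<bar> \<le> sqrt (measure M (space M)) * sqrt (\<integral>t. (h t)\<^sup>2 \<partial>M)"
proof (cases "measure M (space M) = 0")
  case True
  then have "space M \<in> null_sets M"
    by (simp add: emeasure_eq_measure null_setsI)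
  then have "AE t in M. h t = 0"
    by (rule AE_I') auto
  then show ?thesis
    by (simp add: integral_eq_zero_AE)
next
  case False
  define \<mu> where "\<mu> = measure M (space M)"
  define I where "I = integral\<^sup>L M h"
  define J where "J = (\<integral>t. (h t)\<^sup>2 \<partial>M)"
  define m where "m = I / \<mu>"
  have \<mu>: "0 < \<mu>"
    using False by (simp add: \<mu>_def zero_less_measure_iff)
  have "integrable M h"
    using h h2 by (rule square_integrable_imp_integrable)
  have "0 \<le> (\<integral>t. (h t - m)\<^sup>2 \<partial>M)"
    by (intro integral_nonneg_AE AE_I2) simp
  also have "\<dots> = (\<integral>t. (h t)\<^sup>2 - (2 * m) * h t + m\<^sup>2 \<partial>M)"
    by (simp add: power2_diff algebra_simps)
  also have "\<dots> = J - 2 * m * I + \<mu> * m\<^sup>2"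
    using \<open>integrable M h\<close> h2 by (simp add: J_def I_def \<mu>_def)
  also have "\<dots> = J - I\<^sup>2 / \<mu>"
    using \<mu> by (simp add: m_def field_simps power2_eq_square)
  finally have "I\<^sup>2 \<le> \<mu> * J"
    using \<mu> by (simp add: field_simps)
  then have "sqrt (I\<^sup>2) \<le> sqrt (\<mu> * J)"
    by (rule real_sqrt_le_mono)
  then show ?thesis
    by (simp add: I_def J_def \<mu>_def real_sqrt_mult)
qed

lemma abs_norm_square_diff_le:
  fixes a b :: "'a::real_normed_vector"
  assumes "norm a \<le> B" "norm b \<le> B"
  shows "\<bar>(norm a)\<^sup>2 - (norm b)\<^sup>2\<bar> \<le> 2 * B * norm (a - b)"
proof -
  have "(norm a)\<^sup>2 - (norm b)\<^sup>2 = (norm a - norm b) * (norm a + norm b)"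
    by (simp add: power2_eq_square algebra_simps)
  then have "\<bar>(norm a)\<^sup>2 - (norm b)\<^sup>2\<bar> = \<bar>norm a - norm b\<bar> * (norm a + norm b)"
    by (simp add: abs_mult)
  also have "\<dots> \<le> norm (a - b) * (2 * B)"
    using assms by (intro mult_mono norm_triangle_ineq3) auto
  finally show ?thesis
    by (simp add: algebra_simps)
qed

lemma lipschitz_on_triple_norm_le:
  fixes g :: "'a::real_normed_vector \<times> 'b::real_normed_vector \<times> 'c::real_normed_vector
    \<Rightarrow> 'r::real_normed_vector"
  assumes "L-lipschitz_on UNIV g"
  shows "norm (g (u1, v1, w1) - g (u2, v2, w2))
    \<le> L * (norm (u1 - u2) + norm (v1 - v2) + norm (w1 - w2))"
proof -
  have "dist (u1, v1, w1) (u2, v2, w2) = norm (u1 - u2, v1 - v2, w1 - w2)"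
    by (simp add: dist_norm)
  also have "\<dots> \<le> norm (u1 - u2) + norm (v1 - v2, w1 - w2)"
    by (rule norm_Pair_le)
  also have "norm (v1 - v2, w1 - w2) \<le> norm (v1 - v2) + norm (w1 - w2)"
    by (rule norm_Pair_le)
  finally have "dist (u1, v1, w1) (u2, v2, w2) \<le> norm (u1 - u2) + norm (v1 - v2) + norm (w1 - w2)"
    by simp
  then show ?thesis
    using lipschitz_onD[OF assms, of "(u1, v1, w1)" "(u2, v2, w2)"] lipschitz_on_nonneg[OF assms]
    by (simp add: dist_norm) (meson mult_left_mono order_trans)
qed

lemma norm_le_l1norm: "norm v \<le> l1norm v"
  unfolding l1norm_def by (rule norm_le_l1_cart)

section \<open>Square-integrable and \<open>H\<^sup>1\<close> functions on the interval\<close>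

abbreviation lebesgue_Omega :: "real \<Rightarrow> real \<Rightarrow> real measure"
  where "lebesgue_Omega t0 tE \<equiv> lebesgue_on (Omega t0 tE)"

lemma finite_measure_lebesgue_Omega: "finite_measure (lebesgue_Omega t0 tE)"
  unfolding Omega_def by (intro finite_measure_lebesgue_on) simp

lemma measure_lebesgue_Omega:
  "t0 \<le> tE \<Longrightarrow> measure (lebesgue_Omega t0 tE) (Omega t0 tE) = tE - t0"
  by (simp add: Omega_def measure_restrict_space)

lemma L2_on_integrable_norm:
  assumes "L2_on t0 tE u"
  shows "integrable (lebesgue_Omega t0 tE) (\<lambda>t. norm (u t))"
proof (rule finite_measure.square_integrable_imp_integrable[OF finite_measure_lebesgue_Omega])
  show "(\<lambda>t. norm (u t)) \<in> borel_measurable (lebesgue_Omega t0 tE)"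
    using assms unfolding L2_on_def by (auto intro: measurable_compose[OF _ borel_measurable_norm])
  show "integrable (lebesgue_Omega t0 tE) (\<lambda>t. (norm (u t))\<^sup>2)"
    using assms unfolding L2_on_def by simp
qed

lemma L2_on_integrable: "L2_on t0 tE u \<Longrightarrow> integrable (lebesgue_Omega t0 tE) u"
  using L2_on_integrable_norm integrable_norm_iff L2_on_def by blast

lemma L2_on_integrable_l1norm:
  fixes z :: "real \<Rightarrow> real^'n"
  assumes "L2_on t0 tE z"
  shows "integrable (lebesgue_Omega t0 tE) (\<lambda>t. l1norm (z t))"
proof -
  have "\<forall>j. integrable (lebesgue_Omega t0 tE) (\<lambda>t. z t $ j)"
    using L2_on_integrable[OF assms] integrable_iff_component[of "Omega t0 tE" z]
    by (simp add: Omega_def)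
  then show ?thesis
    unfolding l1norm_def by (intro Bochner_Integration.integrable_sum integrable_abs) auto
qed

lemma L2_on_diff:
  assumes "L2_on t0 tE u" "L2_on t0 tE v"
  shows "L2_on t0 tE (\<lambda>t. u t - v t)"
  unfolding L2_on_def
proof
  show meas: "(\<lambda>t. u t - v t) \<in> borel_measurable (lebesgue_Omega t0 tE)"
    using assms by (auto simp: L2_on_def)
  have bound: "(norm (u t - v t))\<^sup>2 \<le> 2 * (norm (u t))\<^sup>2 + 2 * (norm (v t))\<^sup>2" for t
  proof -
    have "(norm (u t - v t))\<^sup>2 \<le> (norm (u t) + norm (v t))\<^sup>2"
      by (intro power_mono norm_triangle_ineq4) simp
    also have "\<dots> \<le> 2 * (norm (u t))\<^sup>2 + 2 * (norm (v t))\<^sup>2"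
      using sum_squares_bound[of "norm (u t)" "norm (v t)"] by (simp add: power2_eq_square algebra_simps)
    finally show ?thesis .
  qed
  have "integrable (lebesgue_Omega t0 tE) (\<lambda>t. 2 * (norm (u t))\<^sup>2 + 2 * (norm (v t))\<^sup>2)"
    using assms by (intro Bochner_Integration.integrable_add integrable_mult_right) (auto simp: L2_on_def)
  then show "integrable (lebesgue_Omega t0 tE) (\<lambda>t. (norm (u t - v t))\<^sup>2)"
  proof (rule Bochner_Integration.integrable_bound)
    show "(\<lambda>t. (norm (u t - v t))\<^sup>2) \<in> borel_measurable (lebesgue_Omega t0 tE)"
      using meas by measurable
    show "AE t in lebesgue_Omega t0 tE.
        norm ((norm (u t - v t))\<^sup>2) \<le> norm (2 * (norm (u t))\<^sup>2 + 2 * (norm (v t))\<^sup>2)"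
      using bound by (intro AE_I2) (metis abs_ge_self abs_power2 order_trans real_norm_def)
  qed
qed

lemma integral_norm_le_sqrt_integral_square:
  assumes "t0 \<le> tE" "L2_on t0 tE u"
  shows "(\<integral>t. norm (u t) \<partial>lebesgue_Omega t0 tE)
    \<le> sqrt (tE - t0) * sqrt (\<integral>t. (norm (u t))\<^sup>2 \<partial>lebesgue_Omega t0 tE)"
  using finite_measure.abs_integral_le_sqrt_measure_mult_sqrt_integral_square
      [OF finite_measure_lebesgue_Omega, of "\<lambda>t. norm (u t)" t0 tE] assms
  by (auto simp: L2_on_def measure_lebesgue_Omega)

lemma integral_norm_le_normX:
  assumes "t0 \<le> tE"
  shows "L2_on t0 tE y \<Longrightarrow> (\<integral>t. norm (y t) \<partial>lebesgue_Omega t0 tE) \<le> sqrt (tE - t0) * normX t0 tE y dy z"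
    and "L2_on t0 tE dy \<Longrightarrow> (\<integral>t. norm (dy t) \<partial>lebesgue_Omega t0 tE) \<le> sqrt (tE - t0) * normX t0 tE y dy z"
    and "L2_on t0 tE z \<Longrightarrow> (\<integral>t. norm (z t) \<partial>lebesgue_Omega t0 tE) \<le> sqrt (tE - t0) * normX t0 tE y dy z"
proof -
  have *: "(\<integral>t. norm (u t) \<partial>lebesgue_Omega t0 tE) \<le> sqrt (tE - t0) * normX t0 tE y dy z"
    if u: "L2_on t0 tE u"
      and part: "sqrt (\<integral>t. (norm (u t))\<^sup>2 \<partial>lebesgue_Omega t0 tE) \<le> normX t0 tE y dy z"
    for u :: "real \<Rightarrow> real^'n"
  proof -
    have "sqrt (tE - t0) * sqrt (\<integral>t. (norm (u t))\<^sup>2 \<partial>lebesgue_Omega t0 tE)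
        \<le> sqrt (tE - t0) * normX t0 tE y dy z"
      using part assms by (intro mult_left_mono) auto
    then show ?thesis
      using integral_norm_le_sqrt_integral_square[OF assms u] by linarith
  qed
  have parts: "sqrt (\<integral>t. (norm (y t))\<^sup>2 \<partial>lebesgue_Omega t0 tE) \<le> normX t0 tE y dy z"
    "sqrt (\<integral>t. (norm (dy t))\<^sup>2 \<partial>lebesgue_Omega t0 tE) \<le> normX t0 tE y dy z"
    "sqrt (\<integral>t. (norm (z t))\<^sup>2 \<partial>lebesgue_Omega t0 tE) \<le> normX t0 tE y dy z"
    unfolding normX_def by (auto intro!: real_sqrt_le_mono integral_nonneg_AE)
  show "L2_on t0 tE y \<Longrightarrow> (\<integral>t. norm (y t) \<partial>lebesgue_Omega t0 tE) \<le> sqrt (tE - t0) * normX t0 tE y dy z"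
    by (rule *[OF _ parts(1)])
  show "L2_on t0 tE dy \<Longrightarrow> (\<integral>t. norm (dy t) \<partial>lebesgue_Omega t0 tE) \<le> sqrt (tE - t0) * normX t0 tE y dy z"
    by (rule *[OF _ parts(2)])
  show "L2_on t0 tE z \<Longrightarrow> (\<integral>t. norm (z t) \<partial>lebesgue_Omega t0 tE) \<le> sqrt (tE - t0) * normX t0 tE y dy z"
    by (rule *[OF _ parts(3)])
qed

lemma integral_norms_le_normX:
  assumes "t0 \<le> tE" "L2_on t0 tE y" "L2_on t0 tE dy" "L2_on t0 tE z"
  shows "(\<integral>t. norm (dy t) + norm (y t) + norm (z t) \<partial>lebesgue_Omega t0 tE)
    \<le> 3 * sqrt (tE - t0) * normX t0 tE y dy z"
  using integral_norm_le_normX[OF assms(1), where y = y and dy = dy and z = z] assms(2-4)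
  by (simp add: L2_on_integrable_norm Bochner_Integration.integral_add)

lemma H1_pair_diff:
  assumes "H1_pair t0 tE y1 dy1" "H1_pair t0 tE y2 dy2"
  shows "H1_pair t0 tE (\<lambda>t. y1 t - y2 t) (\<lambda>t. dy1 t - dy2 t)"
proof -
  have "((\<lambda>t. dy1 t - dy2 t) has_integral (y1 s - y2 s - (y1 t0 - y2 t0))) {t0..s}"
    if "s \<in> {t0..tE}" for s
    using has_integral_diff[of dy1 "y1 s - y1 t0" "{t0..s}" dy2 "y2 s - y2 t0"] assms that
    by (simp add: H1_pair_def algebra_simps)
  with assms show ?thesis
    by (simp add: H1_pair_def L2_on_diff)
qed

lemma H1_pair_increment_le:
  assumes H: "H1_pair t0 tE y dy" and r: "r \<in> {t0..tE}"
  shows "norm (y r - y t0) \<le> (\<integral>t. norm (dy t) \<partial>lebesgue_Omega t0 tE)"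
proof -
  have L2: "L2_on t0 tE dy"
    using H by (simp add: H1_pair_def)
  have Omega: "Omega t0 tE \<in> sets lebesgue"
    by (simp add: Omega_def)
  have norm_dy: "((\<lambda>t. norm (dy t)) has_integral (\<integral>t. norm (dy t) \<partial>lebesgue_Omega t0 tE)) {t0..tE}"
    using has_integral_integral_lebesgue_on[OF L2_on_integrable_norm[OF L2] Omega]
    by (simp add: Omega_def has_integral_Icc_iff_Ioo)
  have dy: "dy integrable_on {t0..tE}"
    using has_integral_integral_lebesgue_on[OF L2_on_integrable[OF L2] Omega]
    unfolding Omega_def by (metis has_integral_Icc_iff_Ioo has_integral_integrable)
  have sub: "{t0..r} \<subseteq> {t0..tE}"
    using r by auto
  have "(dy has_integral (y r - y t0)) {t0..r}"
    using H r by (simp add: H1_pair_def)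
  then have "norm (y r - y t0) = norm (integral {t0..r} dy)"
    by (simp add: integral_unique)
  also have "\<dots> \<le> integral {t0..r} (\<lambda>t. norm (dy t))"
    using integrable_on_subinterval[OF dy sub]
      integrable_on_subinterval[OF has_integral_integrable[OF norm_dy] sub]
    by (intro integral_norm_bound_integral) auto
  also have "\<dots> \<le> integral {t0..tE} (\<lambda>t. norm (dy t))"
    using integrable_on_subinterval[OF has_integral_integrable[OF norm_dy] sub]
      has_integral_integrable[OF norm_dy] sub
    by (intro integral_subset_le) auto
  also have "\<dots> = (\<integral>t. norm (dy t) \<partial>lebesgue_Omega t0 tE)"
    using norm_dy by (rule integral_unique)
  finally show ?thesis .
qed

lemma H1_pair_norm_le:
  assumes interval: "t0 < tE" and H: "H1_pair t0 tE y dy" and s: "s \<in> {t0..tE}"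
  shows "norm (y s) \<le> (\<integral>t. norm (y t) \<partial>lebesgue_Omega t0 tE) / (tE - t0)
    + 2 * (\<integral>t. norm (dy t) \<partial>lebesgue_Omega t0 tE)"
proof -
  define M where "M = lebesgue_Omega t0 tE"
  define K where "K = (\<integral>t. norm (dy t) \<partial>M)"
  \<comment> \<open>Averaging \<open>|y s| \<le> |y t| + 2 K\<close> over \<open>t\<close>.\<close>
  have pointwise: "norm (y s) \<le> norm (y t) + 2 * K" if "t \<in> Omega t0 tE" for t
  proof -
    have "norm (y s) \<le> norm (y s - y t0) + norm (y t - y t0) + norm (y t)"
      using norm_triangle_ineq[of "y s - y t0" "y t0 - y t"] norm_triangle_ineq[of "y s - y t" "y t"]
        norm_minus_commute[of "y t0" "y t"] by simp
    then show ?thesis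
      using H1_pair_increment_le[OF H s] H1_pair_increment_le[OF H, of t] that
      by (simp add: K_def M_def Omega_def)
  qed
  have integrable_y: "integrable M (\<lambda>t. norm (y t))"
    using H unfolding M_def by (simp add: H1_pair_def L2_on_integrable_norm)
  have integrable_const: "integrable M (\<lambda>t. a)" for a :: real
    unfolding M_def by (rule finite_measure.integrable_const[OF finite_measure_lebesgue_Omega])
  have "(tE - t0) * norm (y s) = (\<integral>t. norm (y s) \<partial>M)"
    using interval by (simp add: M_def measure_lebesgue_Omega)
  also have "\<dots> \<le> (\<integral>t. norm (y t) + 2 * K \<partial>M)"
    using pointwise integrable_y integrable_const
    by (intro integral_mono Bochner_Integration.integrable_add) (auto simp: M_def)
  also have "\<dots> = (\<integral>t. norm (y t) \<partial>M) + (tE - t0) * (2 * K)"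
    using interval unfolding Bochner_Integration.integral_add[OF integrable_y integrable_const]
    by (simp add: M_def measure_lebesgue_Omega)
  finally have "(tE - t0) * norm (y s) \<le> (\<integral>t. norm (y t) \<partial>M) + (tE - t0) * (2 * K)" .
  with interval show ?thesis
    by (simp add: K_def M_def field_simps)
qed

lemma H1_pair_norm_le_normX:
  assumes interval: "t0 < tE" and H: "H1_pair t0 tE y dy" and s: "s \<in> {t0..tE}"
  shows "norm (y s) \<le> (1 / sqrt (tE - t0) + 2 * sqrt (tE - t0)) * normX t0 tE y dy z"
proof -
  define N where "N = normX t0 tE y dy z"
  have L2: "L2_on t0 tE y" "L2_on t0 tE dy"
    using H by (simp_all add: H1_pair_def)
  have "(\<integral>t. norm (y t) \<partial>lebesgue_Omega t0 tE) \<le> sqrt (tE - t0) * N"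
    "(\<integral>t. norm (dy t) \<partial>lebesgue_Omega t0 tE) \<le> sqrt (tE - t0) * N"
    using integral_norm_le_normX(1,2)[where y = y and dy = dy and z = z] interval L2
    by (simp_all add: N_def)
  then have "norm (y s) \<le> sqrt (tE - t0) * N / (tE - t0) + 2 * (sqrt (tE - t0) * N)"
    using interval
    by (intro order_trans[OF H1_pair_norm_le[OF interval H s]] add_mono divide_right_mono) auto
  also have "sqrt (tE - t0) * N / (tE - t0) = N / sqrt (tE - t0)"
    using interval by (simp add: field_simps)
  finally show ?thesis
    by (simp add: N_def algebra_simps)
qed

lemma point_values_norm_le_normX:
  fixes tp :: "'m::finite \<Rightarrow> real"
  assumes "t0 < tE" "H1_pair t0 tE y dy" "\<And>i. tp i \<in> {t0..tE}"
  shows "norm (\<chi> i. y (tp i))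
    \<le> real CARD('m) * (1 / sqrt (tE - t0) + 2 * sqrt (tE - t0)) * normX t0 tE y dy z"
proof -
  have "norm (\<chi> i. y (tp i)) \<le> (\<Sum>i\<in>UNIV. norm (y (tp i)))"
    unfolding norm_vec_def by (rule order_trans[OF L2_set_le_sum]) simp_all
  also have "\<dots> \<le> real CARD('m) * ((1 / sqrt (tE - t0) + 2 * sqrt (tE - t0)) * normX t0 tE y dy z)"
    using H1_pair_norm_le_normX[OF assms(1,2) assms(3)] by (intro sum_bounded_above)
  finally show ?thesis
    by (simp add: mult.assoc)
qed

section \<open>Estimates on the space \<open>X\<close>\<close>

lemma Xspace_L2_on:
  assumes "(y, dy, z) \<in> Xspace t0 tE"
  shows "L2_on t0 tE y" "L2_on t0 tE dy" "L2_on t0 tE z"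
  using assms by (simp_all add: Xspace_def H1_pair_def)

lemma zero_in_Xspace: "(\<lambda>t. 0, \<lambda>t. 0, \<lambda>t. 0) \<in> Xspace t0 tE"
  by (simp add: Xspace_def H1_pair_def L2_on_def)

lemma Xspace_integrand_measurable:
  fixes g :: "real^'ny \<Rightarrow> real^'ny \<Rightarrow> real^'nz \<Rightarrow> real \<Rightarrow> 'r::euclidean_space"
  assumes x: "(y, dy, z) \<in> Xspace t0 tE"
    and g_meas: "\<And>u v w. (\<lambda>t. g u v w t) \<in> borel_measurable (lebesgue_Omega t0 tE)"
    and g_lip: "\<And>t. t \<in> Omega t0 tE \<Longrightarrow> L-lipschitz_on UNIV (\<lambda>(u, v, w). g u v w t)"
  shows "(\<lambda>t. g (dy t) (y t) (z t) t) \<in> borel_measurable (lebesgue_Omega t0 tE)"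
proof -
  have "(\<lambda>t. (\<lambda>(u, v, w). g u v w t) (dy t, y t, z t)) \<in> borel_measurable (lebesgue_Omega t0 tE)"
  proof (rule borel_measurable_Caratheodory[where g = "\<lambda>p t. case p of (u, v, w) \<Rightarrow> g u v w t"
        and X = "\<lambda>t. (dy t, y t, z t)" and L = L])
    show "(\<lambda>t. case p of (u, v, w) \<Rightarrow> g u v w t) \<in> borel_measurable (lebesgue_Omega t0 tE)" for p
      using g_meas by (cases p) simp
    show "L-lipschitz_on UNIV (\<lambda>p. case p of (u, v, w) \<Rightarrow> g u v w t)"
      if "t \<in> space (lebesgue_Omega t0 tE)" for t
      using g_lip that by simp
    show "(\<lambda>t. (dy t, y t, z t)) \<in> borel_measurable (lebesgue_Omega t0 tE)"
      using Xspace_L2_on[OF x] by (auto simp: L2_on_def intro!: measurable_Pair)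
  qed
  then show ?thesis
    by simp
qed

lemma abs_integral_diff_le_normX:
  assumes interval: "t0 \<le> tE"
    and x1: "(y1, dy1, z1) \<in> Xspace t0 tE" and x2: "(y2, dy2, z2) \<in> Xspace t0 tE"
    and g1: "g1 \<in> borel_measurable (lebesgue_Omega t0 tE)"
    and g2: "g2 \<in> borel_measurable (lebesgue_Omega t0 tE)"
    and K: "0 \<le> K"
    and bound: "\<And>t. t \<in> Omega t0 tE \<Longrightarrow>
      \<bar>g1 t - g2 t\<bar> \<le> K * (norm (dy1 t - dy2 t) + norm (y1 t - y2 t) + norm (z1 t - z2 t))"
  shows "\<bar>integral\<^sup>L (lebesgue_Omega t0 tE) g1 - integral\<^sup>L (lebesgue_Omega t0 tE) g2\<bar>
    \<le> K * (3 * sqrt (tE - t0))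
      * normX t0 tE (\<lambda>t. y1 t - y2 t) (\<lambda>t. dy1 t - dy2 t) (\<lambda>t. z1 t - z2 t)"
proof -
  have L2: "L2_on t0 tE (\<lambda>t. y1 t - y2 t)" "L2_on t0 tE (\<lambda>t. dy1 t - dy2 t)"
    "L2_on t0 tE (\<lambda>t. z1 t - z2 t)"
    using Xspace_L2_on[OF x1] Xspace_L2_on[OF x2] by (simp_all add: L2_on_diff)
  have "\<bar>integral\<^sup>L (lebesgue_Omega t0 tE) g1 - integral\<^sup>L (lebesgue_Omega t0 tE) g2\<bar>
    \<le> (\<integral>t. K * (norm (dy1 t - dy2 t) + norm (y1 t - y2 t) + norm (z1 t - z2 t)) \<partial>lebesgue_Omega t0 tE)"
    using g1 g2 bound L2_on_integrable_norm[OF L2(1)] L2_on_integrable_norm[OF L2(2)]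
      L2_on_integrable_norm[OF L2(3)]
    by (intro abs_integral_diff_le integrable_mult_right Bochner_Integration.integrable_add) auto
  also have "\<dots> = K * (\<integral>t. norm (dy1 t - dy2 t) + norm (y1 t - y2 t) + norm (z1 t - z2 t)
      \<partial>lebesgue_Omega t0 tE)"
    by simp
  also have "\<dots> \<le> K * (3 * sqrt (tE - t0)
      * normX t0 tE (\<lambda>t. y1 t - y2 t) (\<lambda>t. dy1 t - dy2 t) (\<lambda>t. z1 t - z2 t))"
    using integral_norms_le_normX[OF interval L2] K by (intro mult_left_mono) auto
  finally show ?thesis
    by (simp add: mult.assoc)
qed

lemma abs_integral_diff_le_L1norm:
  assumes z1: "L2_on t0 tE z1" and z2: "L2_on t0 tE z2"
    and g1: "g1 \<in> borel_measurable (lebesgue_Omega t0 tE)"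
    and g2: "g2 \<in> borel_measurable (lebesgue_Omega t0 tE)"
    and K: "0 \<le> K"
    and bound: "\<And>t. t \<in> Omega t0 tE \<Longrightarrow> \<bar>g1 t - g2 t\<bar> \<le> K * norm (z1 t - z2 t)"
  shows "\<bar>integral\<^sup>L (lebesgue_Omega t0 tE) g1 - integral\<^sup>L (lebesgue_Omega t0 tE) g2\<bar>
    \<le> K * L1norm t0 tE (\<lambda>t. z1 t - z2 t)"
proof -
  have "\<bar>g1 t - g2 t\<bar> \<le> K * l1norm (z1 t - z2 t)" if "t \<in> Omega t0 tE" for t
    using bound[OF that] mult_left_mono[OF norm_le_l1norm K] by (rule order_trans)
  then have "\<bar>integral\<^sup>L (lebesgue_Omega t0 tE) g1 - integral\<^sup>L (lebesgue_Omega t0 tE) g2\<bar>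
    \<le> (\<integral>t. K * l1norm (z1 t - z2 t) \<partial>lebesgue_Omega t0 tE)"
    using g1 g2 L2_on_integrable_l1norm[OF L2_on_diff[OF z1 z2]]
    by (intro abs_integral_diff_le integrable_mult_right) auto
  then show ?thesis
    by (simp add: L1norm_def)
qed

locale control_problem =
  fixes t0 tE :: real
    and tp :: "'m::finite \<Rightarrow> real"
    and f :: "real^'ny \<Rightarrow> real^'ny \<Rightarrow> real^'nz \<Rightarrow> real \<Rightarrow> real"
    and c :: "real^'ny \<Rightarrow> real^'ny \<Rightarrow> real^'nz \<Rightarrow> real \<Rightarrow> real^'nc"
    and b :: "(real^'ny)^'m \<Rightarrow> real^'nb"
    and Lf Lc Lb Bc Bb :: real
  assumes interval: "t0 < tE"
    and points: "\<And>i. tp i \<in> {t0..tE}"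
    and f_meas: "\<And>u v w. (\<lambda>t. f u v w t) \<in> borel_measurable (lebesgue_Omega t0 tE)"
    and c_meas: "\<And>u v w. (\<lambda>t. c u v w t) \<in> borel_measurable (lebesgue_Omega t0 tE)"
    and f_lipschitz: "\<And>t. t \<in> Omega t0 tE \<Longrightarrow> Lf-lipschitz_on UNIV (\<lambda>(u, v, w). f u v w t)"
    and c_lipschitz: "\<And>t. t \<in> Omega t0 tE \<Longrightarrow> Lc-lipschitz_on UNIV (\<lambda>(u, v, w). c u v w t)"
    and b_lipschitz: "Lb-lipschitz_on UNIV b"
    and c_bounded: "\<And>y dy z t. (y, dy, z) \<in> Xspace t0 tE \<Longrightarrow> z_nonneg t0 tE z \<Longrightarrow>
      t \<in> Omega t0 tE \<Longrightarrow> norm (c (dy t) (y t) (z t) t) \<le> Bc"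
    and b_bounded: "\<And>y dy (z :: real \<Rightarrow> real^'nz). (y, dy, z) \<in> Xspace t0 tE \<Longrightarrow>
      z_nonneg t0 tE z \<Longrightarrow> norm (b (\<chi> i. y (tp i))) \<le> Bb"
begin

lemma midpoint_in_Omega: "(t0 + tE) / 2 \<in> Omega t0 tE"
  using interval by (simp add: Omega_def)

lemma Lf_nonneg: "0 \<le> Lf"
  using f_lipschitz[OF midpoint_in_Omega] by (rule lipschitz_on_nonneg)

lemma Lc_nonneg: "0 \<le> Lc"
  using c_lipschitz[OF midpoint_in_Omega] by (rule lipschitz_on_nonneg)

lemma Bc_nonneg: "0 \<le> Bc"
proof -
  have "norm (c 0 0 0 ((t0 + tE) / 2)) \<le> Bc"
    using c_bounded[OF zero_in_Xspace _ midpoint_in_Omega] by (simp add: z_nonneg_def)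
  then show ?thesis
    by (meson norm_ge_zero order_trans)
qed

lemma f_diff_le:
  "t \<in> Omega t0 tE \<Longrightarrow>
    \<bar>f u1 v1 w1 t - f u2 v2 w2 t\<bar> \<le> Lf * (norm (u1 - u2) + norm (v1 - v2) + norm (w1 - w2))"
  using lipschitz_on_triple_norm_le[OF f_lipschitz] by fastforce

lemma c_diff_le:
  "t \<in> Omega t0 tE \<Longrightarrow>
    norm (c u1 v1 w1 t - c u2 v2 w2 t) \<le> Lc * (norm (u1 - u2) + norm (v1 - v2) + norm (w1 - w2))"
  using lipschitz_on_triple_norm_le[OF c_lipschitz] by fastforce

lemma f_integrand_measurable:
  "(y, dy, z) \<in> Xspace t0 tE \<Longrightarrow>
    (\<lambda>t. f (dy t) (y t) (z t) t) \<in> borel_measurable (lebesgue_Omega t0 tE)"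
  using Xspace_integrand_measurable[OF _ f_meas f_lipschitz] .

lemma c_square_integrand_measurable:
  assumes "(y, dy, z) \<in> Xspace t0 tE"
  shows "(\<lambda>t. (norm (c (dy t) (y t) (z t) t))\<^sup>2) \<in> borel_measurable (lebesgue_Omega t0 tE)"
  using Xspace_integrand_measurable[OF assms c_meas c_lipschitz] by measurable

lemma c_square_diff_le:
  assumes x1: "(y1, dy1, z1) \<in> Xspace t0 tE" "z_nonneg t0 tE z1"
    and x2: "(y2, dy2, z2) \<in> Xspace t0 tE" "z_nonneg t0 tE z2"
    and t: "t \<in> Omega t0 tE"
  shows "\<bar>(norm (c (dy1 t) (y1 t) (z1 t) t))\<^sup>2 - (norm (c (dy2 t) (y2 t) (z2 t) t))\<^sup>2\<bar>
    \<le> 2 * Bc * Lc * (norm (dy1 t - dy2 t) + norm (y1 t - y2 t) + norm (z1 t - z2 t))"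
proof -
  have "\<bar>(norm (c (dy1 t) (y1 t) (z1 t) t))\<^sup>2 - (norm (c (dy2 t) (y2 t) (z2 t) t))\<^sup>2\<bar>
      \<le> 2 * Bc * norm (c (dy1 t) (y1 t) (z1 t) t - c (dy2 t) (y2 t) (z2 t) t)"
    by (rule abs_norm_square_diff_le[OF c_bounded[OF x1 t] c_bounded[OF x2 t]])
  also have "\<dots> \<le> 2 * Bc * (Lc * (norm (dy1 t - dy2 t) + norm (y1 t - y2 t) + norm (z1 t - z2 t)))"
    using c_diff_le[OF t] Bc_nonneg by (intro mult_left_mono) auto
  finally show ?thesis
    by (simp add: mult.assoc)
qed

lemma rfun_bounded:
  assumes x: "(y, dy, z) \<in> Xspace t0 tE" and nonneg: "z_nonneg t0 tE z"
  shows "\<bar>rfun t0 tE tp c b y dy z\<bar> \<le> (tE - t0) * Bc\<^sup>2 + Bb\<^sup>2"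
proof -
  have "\<bar>(\<integral>t. (norm (c (dy t) (y t) (z t) t))\<^sup>2 \<partial>lebesgue_Omega t0 tE) - (\<integral>t. 0 \<partial>lebesgue_Omega t0 tE)\<bar>
      \<le> (\<integral>t. Bc\<^sup>2 \<partial>lebesgue_Omega t0 tE)"
    using c_square_integrand_measurable[OF x] c_bounded[OF x nonneg]
      finite_measure.integrable_const[OF finite_measure_lebesgue_Omega]
    by (intro abs_integral_diff_le) (auto intro: power_mono)
  moreover have "(norm (b (\<chi> i. y (tp i))))\<^sup>2 \<le> Bb\<^sup>2"
    using b_bounded[OF x nonneg] by (simp add: power_mono)
  ultimately show ?thesis
    using interval by (simp add: rfun_def measure_lebesgue_Omega)
qed

lemma Ffun_lipschitz_normX:
  assumes x1: "(y1, dy1, z1) \<in> Xspace t0 tE" and x2: "(y2, dy2, z2) \<in> Xspace t0 tE"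
  shows "\<bar>Ffun t0 tE f y1 dy1 z1 - Ffun t0 tE f y2 dy2 z2\<bar>
    \<le> Lf * (3 * sqrt (tE - t0))
      * normX t0 tE (\<lambda>t. y1 t - y2 t) (\<lambda>t. dy1 t - dy2 t) (\<lambda>t. z1 t - z2 t)"
  unfolding Ffun_def
  using interval f_integrand_measurable[OF x1] f_integrand_measurable[OF x2] Lf_nonneg f_diff_le
  by (intro abs_integral_diff_le_normX[OF _ x1 x2]) auto

lemma b_square_diff_le_normX:
  fixes z1 z2 :: "real \<Rightarrow> real^'nz"
  assumes x1: "(y1, dy1, z1) \<in> Xspace t0 tE" "z_nonneg t0 tE z1"
    and x2: "(y2, dy2, z2) \<in> Xspace t0 tE" "z_nonneg t0 tE z2"
  shows "\<bar>(norm (b (\<chi> i. y1 (tp i))))\<^sup>2 - (norm (b (\<chi> i. y2 (tp i))))\<^sup>2\<bar>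
    \<le> 2 * Bb * Lb * (real CARD('m) * (1 / sqrt (tE - t0) + 2 * sqrt (tE - t0)))
      * normX t0 tE (\<lambda>t. y1 t - y2 t) (\<lambda>t. dy1 t - dy2 t) (\<lambda>t. z1 t - z2 t)"
proof -
  define C where "C = real CARD('m) * (1 / sqrt (tE - t0) + 2 * sqrt (tE - t0))
    * normX t0 tE (\<lambda>t. y1 t - y2 t) (\<lambda>t. dy1 t - dy2 t) (\<lambda>t. z1 t - z2 t)"
  define Y1 Y2 where "Y1 = (\<chi> i. y1 (tp i))" and "Y2 = (\<chi> i. y2 (tp i))"
  have "H1_pair t0 tE (\<lambda>t. y1 t - y2 t) (\<lambda>t. dy1 t - dy2 t)"
    using x1(1) x2(1) by (intro H1_pair_diff) (simp_all add: Xspace_def)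
  then have "norm (\<chi> i. y1 (tp i) - y2 (tp i)) \<le> C"
    unfolding C_def by (rule point_values_norm_le_normX[where tp = tp, OF interval _ points])
  moreover have "Y1 - Y2 = (\<chi> i. y1 (tp i) - y2 (tp i))"
    by (simp add: Y1_def Y2_def vec_eq_iff)
  ultimately have "Lb * norm (Y1 - Y2) \<le> Lb * C"
    using lipschitz_on_nonneg[OF b_lipschitz] by (simp add: mult_left_mono)
  then have b_diff: "norm (b Y1 - b Y2) \<le> Lb * C"
    using lipschitz_onD[OF b_lipschitz, of Y1 Y2] by (simp add: dist_norm)
  have b1: "norm (b Y1) \<le> Bb" and b2: "norm (b Y2) \<le> Bb"
    using b_bounded[OF x1] b_bounded[OF x2] by (simp_all add: Y1_def Y2_def)
  then have "0 \<le> Bb"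
    by (meson norm_ge_zero order_trans)
  then show ?thesis
    using abs_norm_square_diff_le[OF b1 b2] mult_left_mono[OF b_diff, of "2 * Bb"]
    by (simp add: Y1_def Y2_def C_def algebra_simps)
qed

lemma rfun_lipschitz_normX:
  assumes x1: "(y1, dy1, z1) \<in> Xspace t0 tE" "z_nonneg t0 tE z1"
    and x2: "(y2, dy2, z2) \<in> Xspace t0 tE" "z_nonneg t0 tE z2"
  shows "\<bar>rfun t0 tE tp c b y1 dy1 z1 - rfun t0 tE tp c b y2 dy2 z2\<bar>
    \<le> (2 * Bc * Lc * (3 * sqrt (tE - t0))
        + 2 * Bb * Lb * (real CARD('m) * (1 / sqrt (tE - t0) + 2 * sqrt (tE - t0))))
      * normX t0 tE (\<lambda>t. y1 t - y2 t) (\<lambda>t. dy1 t - dy2 t) (\<lambda>t. z1 t - z2 t)"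
proof -
  have "\<bar>(\<integral>t. (norm (c (dy1 t) (y1 t) (z1 t) t))\<^sup>2 \<partial>lebesgue_Omega t0 tE)
      - (\<integral>t. (norm (c (dy2 t) (y2 t) (z2 t) t))\<^sup>2 \<partial>lebesgue_Omega t0 tE)\<bar>
    \<le> 2 * Bc * Lc * (3 * sqrt (tE - t0))
      * normX t0 tE (\<lambda>t. y1 t - y2 t) (\<lambda>t. dy1 t - dy2 t) (\<lambda>t. z1 t - z2 t)"
    using interval c_square_integrand_measurable x1(1) x2(1) Bc_nonneg Lc_nonneg
      c_square_diff_le[OF x1 x2]
    by (intro abs_integral_diff_le_normX[OF _ x1(1) x2(1)]) auto
  with b_square_diff_le_normX[OF x1 x2] show ?thesis
    unfolding rfun_def by (simp add: algebra_simps abs_triangle_ineq)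
qed

lemma Ffun_lipschitz_L1norm:
  assumes "(y, dy, z1) \<in> Xspace t0 tE" "(y, dy, z2) \<in> Xspace t0 tE"
  shows "\<bar>Ffun t0 tE f y dy z1 - Ffun t0 tE f y dy z2\<bar> \<le> Lf * L1norm t0 tE (\<lambda>t. z1 t - z2 t)"
proof -
  have "\<bar>f (dy t) (y t) (z1 t) t - f (dy t) (y t) (z2 t) t\<bar> \<le> Lf * norm (z1 t - z2 t)"
    if "t \<in> Omega t0 tE" for t
    using f_diff_le[OF that, of "dy t" "y t" "z1 t" "dy t" "y t" "z2 t"] by simp
  then show ?thesis
    unfolding Ffun_def
    using Xspace_L2_on(3)[OF assms(1)] Xspace_L2_on(3)[OF assms(2)]
      f_integrand_measurable[OF assms(1)] f_integrand_measurable[OF assms(2)] Lf_nonneg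
    by (intro abs_integral_diff_le_L1norm) auto
qed

lemma rfun_lipschitz_L1norm:
  assumes x1: "(y, dy, z1) \<in> Xspace t0 tE" "z_nonneg t0 tE z1"
    and x2: "(y, dy, z2) \<in> Xspace t0 tE" "z_nonneg t0 tE z2"
  shows "\<bar>rfun t0 tE tp c b y dy z1 - rfun t0 tE tp c b y dy z2\<bar>
    \<le> 2 * Bc * Lc * L1norm t0 tE (\<lambda>t. z1 t - z2 t)"
  unfolding rfun_def
  using Xspace_L2_on(3)[OF x1(1)] Xspace_L2_on(3)[OF x2(1)]
    c_square_integrand_measurable[OF x1(1)] c_square_integrand_measurable[OF x2(1)]
    Bc_nonneg Lc_nonneg c_square_diff_le[OF x1 x2]
  by (simp, intro abs_integral_diff_le_L1norm) auto

end

theorem mainTheorem20: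
  fixes t0 tE :: real
    and tp :: "'m::finite \<Rightarrow> real"
    and f :: "real^'ny \<Rightarrow> real^'ny \<Rightarrow> real^'nz \<Rightarrow> real \<Rightarrow> real"
    and c :: "real^'ny \<Rightarrow> real^'ny \<Rightarrow> real^'nz \<Rightarrow> real \<Rightarrow> real^'nc"
    and b :: "(real^'ny)^'m \<Rightarrow> real^'nb"
  assumes interval: "t0 < tE"
    and points: "\<And>i. tp i \<in> {t0..tE}"
    \<comment> \<open>implicit standing assumption: f and c are measurable in t (Caratheodory)\<close>
    and f_meas: "\<And>u v w. (\<lambda>t. f u v w t) \<in> borel_measurable (lebesgue_on (Omega t0 tE))"
    and c_meas: "\<And>u v w. (\<lambda>t. c u v w t) \<in> borel_measurable (lebesgue_on (Omega t0 tE))"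
    \<comment> \<open>(A.2)\<close>
    and A2_c: "\<exists>B. \<forall>y dy z. (y, dy, z) \<in> Xspace t0 tE \<and> z_nonneg t0 tE z \<longrightarrow>
                 (\<forall>t\<in>Omega t0 tE. l1norm (c (dy t) (y t) (z t) t) \<le> B)"
    and A2_b: "\<exists>B. \<forall>y dy (z :: real \<Rightarrow> real^'nz). (y, dy, z) \<in> Xspace t0 tE \<and> z_nonneg t0 tE z \<longrightarrow>
                 l1norm (b (\<chi> i. y (tp i))) \<le> B"
    and A2_F: "\<exists>m. \<forall>y dy z. (y, dy, z) \<in> Xspace t0 tE \<and> z_nonneg t0 tE z \<longrightarrow>
                 m \<le> Ffun t0 tE f y dy z"
    \<comment> \<open>(A.3)\<close>
    and A3_f: "\<exists>L. \<forall>t\<in>Omega t0 tE. L-lipschitz_on UNIV (\<lambda>(u, v, w). f u v w t)"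
    and A3_c: "\<exists>L. \<forall>t\<in>Omega t0 tE. L-lipschitz_on UNIV (\<lambda>(u, v, w). c u v w t)"
    and A3_b: "\<exists>L. L-lipschitz_on UNIV b"
  shows
    \<comment> \<open>F bounded below on {x : z >= 0}\<close>
    "(\<exists>m. \<forall>y dy z. (y, dy, z) \<in> Xspace t0 tE \<and> z_nonneg t0 tE z \<longrightarrow>
         m \<le> Ffun t0 tE f y dy z)
    \<comment> \<open>r bounded on {x : z >= 0}\<close>
   \<and> (\<exists>B. \<forall>y dy z. (y, dy, z) \<in> Xspace t0 tE \<and> z_nonneg t0 tE z \<longrightarrow>
         \<bar>rfun t0 tE tp c b y dy z\<bar> \<le> B)
    \<comment> \<open>F Lipschitz in x w.r.t. the X-norm\<close>
   \<and> (\<exists>L. \<forall>y1 dy1 z1 y2 dy2 z2.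
         (y1, dy1, z1) \<in> Xspace t0 tE \<and> (y2, dy2, z2) \<in> Xspace t0 tE \<longrightarrow>
         \<bar>Ffun t0 tE f y1 dy1 z1 - Ffun t0 tE f y2 dy2 z2\<bar>
           \<le> L * normX t0 tE (\<lambda>t. y1 t - y2 t) (\<lambda>t. dy1 t - dy2 t) (\<lambda>t. z1 t - z2 t))
    \<comment> \<open>r Lipschitz in x w.r.t. the X-norm (on {x : z >= 0})\<close>
   \<and> (\<exists>L. \<forall>y1 dy1 z1 y2 dy2 z2.
         (y1, dy1, z1) \<in> Xspace t0 tE \<and> z_nonneg t0 tE z1 \<and>
         (y2, dy2, z2) \<in> Xspace t0 tE \<and> z_nonneg t0 tE z2 \<longrightarrow>
         \<bar>rfun t0 tE tp c b y1 dy1 z1 - rfun t0 tE tp c b y2 dy2 z2\<bar>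
           \<le> L * normX t0 tE (\<lambda>t. y1 t - y2 t) (\<lambda>t. dy1 t - dy2 t) (\<lambda>t. z1 t - z2 t))
    \<comment> \<open>F Lipschitz in z w.r.t. the L1 norm\<close>
   \<and> (\<exists>L. \<forall>y dy z1 z2.
         (y, dy, z1) \<in> Xspace t0 tE \<and> (y, dy, z2) \<in> Xspace t0 tE \<longrightarrow>
         \<bar>Ffun t0 tE f y dy z1 - Ffun t0 tE f y dy z2\<bar>
           \<le> L * L1norm t0 tE (\<lambda>t. z1 t - z2 t))
    \<comment> \<open>r Lipschitz in z w.r.t. the L1 norm (on {x : z >= 0})\<close>
   \<and> (\<exists>L. \<forall>y dy z1 z2.
         (y, dy, z1) \<in> Xspace t0 tE \<and> z_nonneg t0 tE z1 \<and>
         (y, dy, z2) \<in> Xspace t0 tE \<and> z_nonneg t0 tE z2 \<longrightarrow>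
         \<bar>rfun t0 tE tp c b y dy z1 - rfun t0 tE tp c b y dy z2\<bar>
           \<le> L * L1norm t0 tE (\<lambda>t. z1 t - z2 t))"
proof -
  obtain Lf where Lf: "\<forall>t\<in>Omega t0 tE. Lf-lipschitz_on UNIV (\<lambda>(u, v, w). f u v w t)"
    using A3_f by blast
  obtain Lc where Lc: "\<forall>t\<in>Omega t0 tE. Lc-lipschitz_on UNIV (\<lambda>(u, v, w). c u v w t)"
    using A3_c by blast
  obtain Lb where Lb: "Lb-lipschitz_on UNIV b"
    using A3_b by blast
  obtain Bc where Bc: "\<forall>y dy z. (y, dy, z) \<in> Xspace t0 tE \<and> z_nonneg t0 tE z \<longrightarrow>
      (\<forall>t\<in>Omega t0 tE. l1norm (c (dy t) (y t) (z t) t) \<le> Bc)"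
    using A2_c by blast
  obtain Bb where Bb: "\<forall>y dy (z :: real \<Rightarrow> real^'nz). (y, dy, z) \<in> Xspace t0 tE \<and> z_nonneg t0 tE z \<longrightarrow>
      l1norm (b (\<chi> i. y (tp i))) \<le> Bb"
    using A2_b by blast
  interpret control_problem t0 tE tp f c b Lf Lc Lb Bc Bb
  proof unfold_locales
    show "norm (c (dy t) (y t) (z t) t) \<le> Bc"
      if "(y, dy, z) \<in> Xspace t0 tE" "z_nonneg t0 tE z" "t \<in> Omega t0 tE" for y dy z t
      using Bc that by (meson norm_le_l1norm order_trans)
    show "norm (b (\<chi> i. y (tp i))) \<le> Bb"
      if "(y, dy, z) \<in> Xspace t0 tE" "z_nonneg t0 tE z" for y dy and z :: "real \<Rightarrow> real^'nz"
      using Bb that by (meson norm_le_l1norm order_trans)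
  qed (use interval points f_meas c_meas Lf Lc Lb in auto)
  show ?thesis
    by (intro conjI; (rule A2_F)?; intro exI allI impI; elim conjE;
        rule rfun_bounded Ffun_lipschitz_normX rfun_lipschitz_normX Ffun_lipschitz_L1norm
          rfun_lipschitz_L1norm; assumption)
qed

end
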